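(* Let $H$ be a graph. Neither a leaf nor a support vertex of $H$ belongs to a good subgraph of $H$.
   Context: Graphs are finite and may have multiple edges and loops. A leaf is a vertex of degree one; a support vertex is a vertex adjacent to a leaf. Good subgraph: Let $Q$ be a subgraph of $H$ without isolated vertices, and $E_Q^-$ the set of edges of $H$ not in $Q$ incident with at least one vertex of $Q$. $Q$ is a good subgraph of $H$ if there exist a set of edges $E$ with $E_Q^-\subseteq E\subseteq E_H\setminus E_Q$ and an orientation $A_E$ of the edges of $E$ (where $d^+(x)$, $d^-(x)$ denote the numbers of arcs of $A_E$ leaving, resp. entering $x$, and $d_H(x)$ is the degree in $H$) such that the arcs of $A_E$ form a family $\mathcal P=\{P_x: x\in V_Q\}$ of oriented paths indexed by the vertices of $Q$ with: (i) every vertex $v$ of $Q$ is the initial vertex of exactly one path of $\mathcal P$, and $d^+(v)=1$, $d^-(v)=d_H(v)-d_Q(v)-1$; (ii) if $x$ is an inner vertex of a path of $\mathcal P$, then $d^+(x)=1$ and $d^-(x)=d_H(x)-1$; (iii) if $x$ is an end vertex of a path of $\mathcal P$, then $d^-(x)<d_H(x)$. *)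

theory Defs
  imports Main
begin

text \<open>A (finite) multigraph H with loops and multiple edges is given by a vertex set V,
an edge set Ed (abstract edge names) and an endpoint map ends :: 'e \<Rightarrow> 'v \<times> 'v
(the order of the pair carries no meaning).  A loop e has fst (ends e) = snd (ends e).\<close>

definition multigraph :: "'v set \<Rightarrow> 'e set \<Rightarrow> ('e \<Rightarrow> 'v \<times> 'v) \<Rightarrow> bool" where
  "multigraph V Ed ends \<longleftrightarrow> finite V \<and> finite Ed \<and>
     (\<forall>e\<in>Ed. fst (ends e) \<in> V \<and> snd (ends e) \<in> V)"

definition incident :: "('e \<Rightarrow> 'v \<times> 'v) \<Rightarrow> 'e \<Rightarrow> 'v \<Rightarrow> bool" where
  "incident ends e x \<longleftrightarrow> fst (ends e) = x \<or> snd (ends e) = x"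

text \<open>Degree of x in the (sub)graph with edge set Ed; loops count twice.\<close>
definition deg :: "'e set \<Rightarrow> ('e \<Rightarrow> 'v \<times> 'v) \<Rightarrow> 'v \<Rightarrow> nat" where
  "deg Ed ends x = card {e\<in>Ed. fst (ends e) = x} + card {e\<in>Ed. snd (ends e) = x}"

definition leaf :: "'v set \<Rightarrow> 'e set \<Rightarrow> ('e \<Rightarrow> 'v \<times> 'v) \<Rightarrow> 'v \<Rightarrow> bool" where
  "leaf V Ed ends x \<longleftrightarrow> x \<in> V \<and> deg Ed ends x = 1"

definition support_vertex :: "'v set \<Rightarrow> 'e set \<Rightarrow> ('e \<Rightarrow> 'v \<times> 'v) \<Rightarrow> 'v \<Rightarrow> bool" where
  "support_vertex V Ed ends x \<longleftrightarrow> x \<in> V \<and>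
     (\<exists>e\<in>Ed. \<exists>l. leaf V Ed ends l \<and> (ends e = (x, l) \<or> ends e = (l, x)))"

definition subgraph_noiso ::
  "'v set \<Rightarrow> 'e set \<Rightarrow> ('e \<Rightarrow> 'v \<times> 'v) \<Rightarrow> 'v set \<Rightarrow> 'e set \<Rightarrow> bool" where
  "subgraph_noiso V Ed ends VQ EQ \<longleftrightarrow> VQ \<subseteq> V \<and> EQ \<subseteq> Ed \<and>
     (\<forall>e\<in>EQ. fst (ends e) \<in> VQ \<and> snd (ends e) \<in> VQ) \<and>
     (\<forall>v\<in>VQ. \<exists>e\<in>EQ. incident ends e v)"

definition EQminus ::
  "'e set \<Rightarrow> ('e \<Rightarrow> 'v \<times> 'v) \<Rightarrow> 'v set \<Rightarrow> 'e set \<Rightarrow> 'e set" where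
  "EQminus Ed ends VQ EQ = {e \<in> Ed - EQ. \<exists>v\<in>VQ. incident ends e v}"

definition orientation ::
  "'e set \<Rightarrow> ('e \<Rightarrow> 'v \<times> 'v) \<Rightarrow> ('e \<Rightarrow> 'v) \<Rightarrow> ('e \<Rightarrow> 'v) \<Rightarrow> bool" where
  "orientation E ends tail head \<longleftrightarrow>
     (\<forall>e\<in>E. (tail e, head e) = ends e \<or> (head e, tail e) = ends e)"

definition outdeg :: "'e set \<Rightarrow> ('e \<Rightarrow> 'v) \<Rightarrow> 'v \<Rightarrow> nat" where
  "outdeg E tail x = card {e\<in>E. tail e = x}"

definition indeg :: "'e set \<Rightarrow> ('e \<Rightarrow> 'v) \<Rightarrow> 'v \<Rightarrow> nat" where
  "indeg E head x = card {e\<in>E. head e = x}"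

definition pverts :: "('e \<Rightarrow> 'v) \<Rightarrow> 'v \<Rightarrow> 'e list \<Rightarrow> 'v list" where
  "pverts head x es = x # map head es"

definition dipath :: "('e \<Rightarrow> 'v) \<Rightarrow> ('e \<Rightarrow> 'v) \<Rightarrow> 'v \<Rightarrow> 'e list \<Rightarrow> bool" where
  "dipath tail head x es \<longleftrightarrow> distinct (pverts head x es) \<and>
     (\<forall>i<length es. tail (es ! i) = pverts head x es ! i)"

definition inner_vertex :: "('e \<Rightarrow> 'v) \<Rightarrow> 'v \<Rightarrow> 'e list \<Rightarrow> 'v \<Rightarrow> bool" where
  "inner_vertex head x es v \<longleftrightarrow> (\<exists>i. 0 < i \<and> i < length es \<and> pverts head x es ! i = v)"

definition end_vertex :: "('e \<Rightarrow> 'v) \<Rightarrow> 'v \<Rightarrow> 'e list \<Rightarrow> 'v" where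
  "end_vertex head x es = last (pverts head x es)"

definition good_subgraph ::
  "'v set \<Rightarrow> 'e set \<Rightarrow> ('e \<Rightarrow> 'v \<times> 'v) \<Rightarrow> 'v set \<Rightarrow> 'e set \<Rightarrow> bool" where
  "good_subgraph V Ed ends VQ EQ \<longleftrightarrow> subgraph_noiso V Ed ends VQ EQ \<and>
    (\<exists>E tail head P.
       EQminus Ed ends VQ EQ \<subseteq> E \<and> E \<subseteq> Ed - EQ \<and>
       orientation E ends tail head \<and>
       \<comment> \<open>the arcs of A_E are partitioned into the paths P x, x \<in> VQ, P x starting at x\<close>
       (\<forall>x\<in>VQ. dipath tail head x (P x) \<and> set (P x) \<subseteq> E) \<and>
       E = (\<Union>x\<in>VQ. set (P x)) \<and>
       (\<forall>x\<in>VQ. \<forall>y\<in>VQ. x \<noteq> y \<longrightarrow> set (P x) \<inter> set (P y) = {}) \<and>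
       \<comment> \<open>(i)\<close>
       (\<forall>v\<in>VQ. outdeg E tail v = 1 \<and>
          int (indeg E head v) = int (deg Ed ends v) - int (deg EQ ends v) - 1) \<and>
       \<comment> \<open>(ii)\<close>
       (\<forall>x\<in>VQ. \<forall>v. inner_vertex head x (P x) v \<longrightarrow>
          outdeg E tail v = 1 \<and> int (indeg E head v) = int (deg Ed ends v) - 1) \<and>
       \<comment> \<open>(iii)\<close>
       (\<forall>x\<in>VQ. indeg E head (end_vertex head x (P x)) < deg Ed ends (end_vertex head x (P x))))"

end

theory Submission
  imports Defs
begin

text \<open>On every path of the family, each vertex v has d^-(v) < d_H(v): at the initial vertex by (i),
  at inner vertices by (ii), at the end vertex by (iii).  A vertex of Q has d_Q \<ge> 1, so (i) forces
  d_H \<ge> 2 and no leaf lies in Q.  If x in Q is adjacent to a leaf l, the edge xl is not in Q (as l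
  is not), so it lies in E_Q^- and hence on some path P_y.  Then l is a vertex of P_y other than
  y, so an arc of P_y enters l and d^-(l) \<ge> 1 = d_H(l), a contradiction.\<close>

definition good_path_system ::
  "'e set \<Rightarrow> ('e \<Rightarrow> 'v \<times> 'v) \<Rightarrow> 'v set \<Rightarrow> 'e set \<Rightarrow>
   'e set \<Rightarrow> ('e \<Rightarrow> 'v) \<Rightarrow> ('e \<Rightarrow> 'v) \<Rightarrow> ('v \<Rightarrow> 'e list) \<Rightarrow> bool" where
  "good_path_system Ed ends VQ EQ E tail head P \<longleftrightarrow>
     EQminus Ed ends VQ EQ \<subseteq> E \<and> E \<subseteq> Ed - EQ \<and>
     orientation E ends tail head \<and>
     (\<forall>x\<in>VQ. dipath tail head x (P x) \<and> set (P x) \<subseteq> E) \<and>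
     E = (\<Union>x\<in>VQ. set (P x)) \<and>
     (\<forall>x\<in>VQ. \<forall>y\<in>VQ. x \<noteq> y \<longrightarrow> set (P x) \<inter> set (P y) = {}) \<and>
     (\<forall>v\<in>VQ. outdeg E tail v = 1 \<and>
        int (indeg E head v) = int (deg Ed ends v) - int (deg EQ ends v) - 1) \<and>
     (\<forall>x\<in>VQ. \<forall>v. inner_vertex head x (P x) v \<longrightarrow>
        outdeg E tail v = 1 \<and> int (indeg E head v) = int (deg Ed ends v) - 1) \<and>
     (\<forall>x\<in>VQ. indeg E head (end_vertex head x (P x)) < deg Ed ends (end_vertex head x (P x)))"

lemma good_subgraph_iff:
  "good_subgraph V Ed ends VQ EQ \<longleftrightarrow> subgraph_noiso V Ed ends VQ EQ \<and>
     (\<exists>E tail head P. good_path_system Ed ends VQ EQ E tail head P)"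
  unfolding good_subgraph_def good_path_system_def by blast

lemma deg_pos:
  assumes "finite Ed" "e \<in> Ed" "incident ends e x"
  shows "0 < deg Ed ends x"
  using assms unfolding deg_def incident_def by (auto simp: card_gt_0_iff)

lemma indeg_pos:
  assumes "finite E" "e \<in> E"
  shows "0 < indeg E head (head e)"
  using assms unfolding indeg_def by (auto simp: card_gt_0_iff)

lemma dipath_tail_in_pverts:
  assumes "dipath tail head x es" "e \<in> set es"
  shows "tail e \<in> set (pverts head x es)"
proof -
  obtain i where "i < length es" "es ! i = e"
    using assms(2) by (auto simp: in_set_conv_nth)
  moreover have "i < length (pverts head x es)"
    using \<open>i < length es\<close> by (simp add: pverts_def)
  ultimately show ?thesis
    using assms(1) nth_mem unfolding dipath_def by metis
qed

lemma good_path_system_deg_less: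
  assumes "good_path_system Ed ends VQ EQ E tail head P" "v \<in> VQ"
  shows "deg EQ ends v < deg Ed ends v"
proof -
  have "int (indeg E head v) = int (deg Ed ends v) - int (deg EQ ends v) - 1"
    using assms unfolding good_path_system_def by blast
  then show ?thesis by linarith
qed

lemma good_path_system_indeg_less_deg:
  assumes sys: "good_path_system Ed ends VQ EQ E tail head P"
    and "x \<in> VQ" and "v \<in> set (pverts head x (P x))"
  shows "indeg E head v < deg Ed ends v"
proof -
  have initial: "int (indeg E head x) = int (deg Ed ends x) - int (deg EQ ends x) - 1"
    and inner: "\<And>u. inner_vertex head x (P x) u \<Longrightarrow>
      int (indeg E head u) = int (deg Ed ends u) - 1"
    and final: "indeg E head (end_vertex head x (P x)) < deg Ed ends (end_vertex head x (P x))"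
    using sys \<open>x \<in> VQ\<close> unfolding good_path_system_def by blast+
  obtain i where "i < length (pverts head x (P x))" and v: "pverts head x (P x) ! i = v"
    using assms(3) by (auto simp: in_set_conv_nth)
  then consider "i = 0" | "0 < i \<and> i < length (P x)" | "i = length (P x)"
    by (fastforce simp: pverts_def)
  then show ?thesis
  proof cases
    case 1
    then show ?thesis using initial v by (simp add: pverts_def)
  next
    case 2
    then show ?thesis using inner[of v] v by (fastforce simp: inner_vertex_def)
  next
    case 3
    have "pverts head x (P x) \<noteq> []" "length (pverts head x (P x)) = Suc (length (P x))"
      by (simp_all add: pverts_def)
    then have "end_vertex head x (P x) = v"
      using v 3 by (simp add: end_vertex_def last_conv_nth)
    then show ?thesis using final by simp
  qed
qed

lemma good_path_system_outside_vertex_deg_ge_2: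
  assumes sys: "good_path_system Ed ends VQ EQ E tail head P" and "finite Ed"
    and "y \<in> VQ" and on_path: "v \<in> set (pverts head y (P y))" and "v \<notin> VQ"
  shows "2 \<le> deg Ed ends v"
proof -
  have "E \<subseteq> Ed" and "set (P y) \<subseteq> E"
    using sys \<open>y \<in> VQ\<close> unfolding good_path_system_def by blast+
  then have "finite E" using \<open>finite Ed\<close> finite_subset by blast
  \<comment> \<open>v is not the initial vertex y of its path, so some arc of the path enters v\<close>
  obtain f where "f \<in> set (P y)" and "head f = v"
    using on_path \<open>y \<in> VQ\<close> \<open>v \<notin> VQ\<close> by (auto simp: pverts_def)
  with \<open>set (P y) \<subseteq> E\<close> have "0 < indeg E head (head f)"
    using indeg_pos[OF \<open>finite E\<close>] by blast
  then have "0 < indeg E head v" using \<open>head f = v\<close> by simp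
  then show ?thesis
    using good_path_system_indeg_less_deg[OF sys \<open>y \<in> VQ\<close> on_path] by linarith
qed

lemma good_subgraph_vertex_deg_ge_2:
  assumes "multigraph V Ed ends" "good_subgraph V Ed ends VQ EQ" "v \<in> VQ"
  shows "2 \<le> deg Ed ends v"
proof -
  obtain E tail head P where sys: "good_path_system Ed ends VQ EQ E tail head P"
    and sub: "subgraph_noiso V Ed ends VQ EQ"
    using assms(2) by (auto simp: good_subgraph_iff)
  have "finite EQ"
    using assms(1) sub by (auto simp: multigraph_def subgraph_noiso_def intro: finite_subset)
  moreover obtain e where "e \<in> EQ" "incident ends e v"
    using sub assms(3) by (auto simp: subgraph_noiso_def)
  ultimately have "0 < deg EQ ends v" by (rule deg_pos)
  then show ?thesis
    using good_path_system_deg_less[OF sys assms(3)] by linarith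
qed

lemma leaf_not_in_good_subgraph:
  assumes "multigraph V Ed ends" "good_subgraph V Ed ends VQ EQ" "leaf V Ed ends l"
  shows "l \<notin> VQ"
proof
  assume "l \<in> VQ"
  then have "2 \<le> deg Ed ends l" by (rule good_subgraph_vertex_deg_ge_2[OF assms(1,2)])
  with assms(3) show False by (simp add: leaf_def)
qed

lemma support_vertex_not_in_good_subgraph:
  assumes mg: "multigraph V Ed ends" and good: "good_subgraph V Ed ends VQ EQ"
    and "support_vertex V Ed ends x"
  shows "x \<notin> VQ"
proof
  assume "x \<in> VQ"
  obtain e l where "e \<in> Ed" and leaf: "leaf V Ed ends l"
    and e: "ends e = (x, l) \<or> ends e = (l, x)"
    using assms(3) by (auto simp: support_vertex_def)
  have "l \<notin> VQ" by (rule leaf_not_in_good_subgraph[OF mg good leaf])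
  obtain E tail head P where sys: "good_path_system Ed ends VQ EQ E tail head P"
    and sub: "subgraph_noiso V Ed ends VQ EQ"
    using good by (auto simp: good_subgraph_iff)
  have "EQminus Ed ends VQ EQ \<subseteq> E" and "orientation E ends tail head"
    and "E = (\<Union>y\<in>VQ. set (P y))" and paths: "\<forall>y\<in>VQ. dipath tail head y (P y)"
    using sys unfolding good_path_system_def by blast+
  have "e \<notin> EQ"
    using sub e \<open>l \<notin> VQ\<close> unfolding subgraph_noiso_def by (metis fst_conv snd_conv)
  then have "e \<in> EQminus Ed ends VQ EQ"
    using \<open>e \<in> Ed\<close> e \<open>x \<in> VQ\<close> by (auto simp: EQminus_def incident_def)
  then have "e \<in> E" using \<open>EQminus Ed ends VQ EQ \<subseteq> E\<close> by blast
  then obtain y where "y \<in> VQ" and "e \<in> set (P y)"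
    using \<open>E = (\<Union>y\<in>VQ. set (P y))\<close> by blast
  have "tail e = l \<or> head e = l"
    using \<open>orientation E ends tail head\<close> \<open>e \<in> E\<close> e by (auto simp: orientation_def)
  then have l_on_path: "l \<in> set (pverts head y (P y))"
    using dipath_tail_in_pverts[of tail head y "P y" e] paths \<open>y \<in> VQ\<close> \<open>e \<in> set (P y)\<close>
    by (auto simp: pverts_def)
  have "finite Ed" using mg by (simp add: multigraph_def)
  then have "2 \<le> deg Ed ends l"
    by (rule good_path_system_outside_vertex_deg_ge_2[OF sys _ \<open>y \<in> VQ\<close> l_on_path \<open>l \<notin> VQ\<close>])
  with leaf show False by (simp add: leaf_def)
qed

theorem mainTheorem6:
  fixes V :: "'v set" and Ed :: "'e set" and ends :: "'e \<Rightarrow> 'v \<times> 'v"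
    and VQ :: "'v set" and EQ :: "'e set" and x :: 'v
  assumes "multigraph V Ed ends"
    and "good_subgraph V Ed ends VQ EQ"
    and "leaf V Ed ends x \<or> support_vertex V Ed ends x"
  shows "x \<notin> VQ"
  using assms(3) leaf_not_in_good_subgraph[OF assms(1,2)]
    support_vertex_not_in_good_subgraph[OF assms(1,2)] by blast

end
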